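(* Let $G^\sigma$ be an oriented graph whose underlying graph is a complete multipartite graph. If every cycle on $4$ vertices in $G^\sigma$ is evenly-oriented, then any two vertices lying in the same part of the multipartition are uniform twins or opposite twins.
   Context: An oriented graph $G^\sigma$ is a simple graph $G$ (underlying graph) together with an orientation of each edge; write $s_{xy}=1$ if there is an arc from $x$ to $y$, $s_{xy}=-1$ if there is an arc from $y$ to $x$, $s_{xy}=0$ otherwise. For an even cycle $u_1u_2\cdots u_ku_1$, its sign is the sign of $\prod_{i=1}^k s_{u_iu_{i+1}}$ with $u_{k+1}=u_1$; the cycle is evenly-oriented if the sign is positive and oddly-oriented if negative. For a common neighbor $w$ of two nonadjacent vertices $u,v$: the edges among $u,v,w$ have uniform orientations if the arcs go from both $u,v$ to $w$ or from $w$ to both $u,v$; opposite orientations if one arc goes from $u$ (resp. $v$) to $w$ and the other from $w$ to $v$ (resp. $u$). Nonadjacent $u,v$ are uniform (resp. opposite) twins if $N(u)=N(v)$ and for every common neighbor the edges have uniform (resp. opposite) orientations. *)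

theory Defs
  imports Main "HOL-Library.Disjoint_Sets"
begin

text \<open>An oriented graph on the finite vertex set V, given by the sign function s:
  s x y = 1 if there is an arc x -> y, s x y = -1 if there is an arc y -> x, 0 otherwise.\<close>
definition oriented_graph :: "'a set \<Rightarrow> ('a \<Rightarrow> 'a \<Rightarrow> int) \<Rightarrow> bool" where
  "oriented_graph V s \<longleftrightarrow> finite V \<and>
     (\<forall>x\<in>V. \<forall>y\<in>V. s x y \<in> {-1, 0, 1} \<and> s y x = - s x y) \<and>
     (\<forall>x\<in>V. s x x = 0)"

definition adj :: "('a \<Rightarrow> 'a \<Rightarrow> int) \<Rightarrow> 'a \<Rightarrow> 'a \<Rightarrow> bool" where
  "adj s x y \<longleftrightarrow> s x y \<noteq> 0"

definition nbhd :: "'a set \<Rightarrow> ('a \<Rightarrow> 'a \<Rightarrow> int) \<Rightarrow> 'a \<Rightarrow> 'a set" where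
  "nbhd V s x = {w \<in> V. adj s x w}"

definition complete_multipartite :: "'a set \<Rightarrow> ('a \<Rightarrow> 'a \<Rightarrow> int) \<Rightarrow> 'a set set \<Rightarrow> bool" where
  "complete_multipartite V s P \<longleftrightarrow> partition_on V P \<and>
     (\<forall>x\<in>V. \<forall>y\<in>V. adj s x y \<longleftrightarrow> \<not> (\<exists>p\<in>P. x \<in> p \<and> y \<in> p))"

definition all_C4_even :: "'a set \<Rightarrow> ('a \<Rightarrow> 'a \<Rightarrow> int) \<Rightarrow> bool" where
  "all_C4_even V s \<longleftrightarrow>
     (\<forall>u1\<in>V. \<forall>u2\<in>V. \<forall>u3\<in>V. \<forall>u4\<in>V.
        distinct [u1, u2, u3, u4] \<and> adj s u1 u2 \<and> adj s u2 u3 \<and> adj s u3 u4 \<and> adj s u4 u1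
        \<longrightarrow> s u1 u2 * s u2 u3 * s u3 u4 * s u4 u1 > 0)"

definition uniform_twins :: "'a set \<Rightarrow> ('a \<Rightarrow> 'a \<Rightarrow> int) \<Rightarrow> 'a \<Rightarrow> 'a \<Rightarrow> bool" where
  "uniform_twins V s u v \<longleftrightarrow> \<not> adj s u v \<and> nbhd V s u = nbhd V s v \<and>
     (\<forall>w\<in>nbhd V s u. (s u w = 1 \<and> s v w = 1) \<or> (s w u = 1 \<and> s w v = 1))"

definition opposite_twins :: "'a set \<Rightarrow> ('a \<Rightarrow> 'a \<Rightarrow> int) \<Rightarrow> 'a \<Rightarrow> 'a \<Rightarrow> bool" where
  "opposite_twins V s u v \<longleftrightarrow> \<not> adj s u v \<and> nbhd V s u = nbhd V s v \<and>
     (\<forall>w\<in>nbhd V s u. (s u w = 1 \<and> s w v = 1) \<or> (s v w = 1 \<and> s w u = 1))"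

end

theory Submission
  imports Defs
begin

text \<open>Two nonadjacent vertices u, v with a common neighbourhood close a 4-cycle u w v w' with any
  two distinct common neighbours w, w'. Its sign is the product of the signs of
  s u w * s v w and s u w' * s v w', so if all 4-cycles are evenly oriented this product
  of arc signs is the same at every common neighbour: +1 everywhere gives uniform twins,
  -1 everywhere opposite twins. In a complete multipartite graph any two vertices of one part
  are such a pair.\<close>

lemma oriented_graph_antisym:
  assumes "oriented_graph V s" "x \<in> V" "y \<in> V"
  shows "s y x = - s x y"
  using assms unfolding oriented_graph_def by blast

lemma oriented_graph_adj_sign:
  assumes "oriented_graph V s" "x \<in> V" "y \<in> V" "adj s x y"
  shows "s x y = 1 \<or> s x y = -1"
  using assms unfolding oriented_graph_def adj_def by blast

lemma oriented_graph_not_adj_self: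
  assumes "oriented_graph V s" "x \<in> V"
  shows "\<not> adj s x x"
  using assms unfolding oriented_graph_def adj_def by blast

lemma all_C4_evenD:
  assumes "all_C4_even V s" "u1 \<in> V" "u2 \<in> V" "u3 \<in> V" "u4 \<in> V"
    and "distinct [u1, u2, u3, u4]"
    and "adj s u1 u2" "adj s u2 u3" "adj s u3 u4" "adj s u4 u1"
  shows "s u1 u2 * s u2 u3 * s u3 u4 * s u4 u1 > 0"
  using assms unfolding all_C4_even_def by blast

locale false_twins =
  fixes V :: "'a set" and s :: "'a \<Rightarrow> 'a \<Rightarrow> int" and u v :: 'a
  assumes oriented: "oriented_graph V s"
    and u_in: "u \<in> V" and v_in: "v \<in> V"
    and not_adj: "\<not> adj s u v"
    and same_nbhd: "nbhd V s u = nbhd V s v"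
begin

lemma common_nbhd_iff:
  "w \<in> nbhd V s u \<longleftrightarrow> w \<in> V \<and> adj s u w \<and> adj s v w"
  using same_nbhd unfolding nbhd_def by blast

lemma arc_signs:
  assumes "w \<in> nbhd V s u"
  shows "s u w = 1 \<or> s u w = -1" "s v w = 1 \<or> s v w = -1"
    and "s w u = - s u w" "s w v = - s v w"
proof -
  have "w \<in> V" "adj s u w" "adj s v w"
    using assms unfolding common_nbhd_iff by blast+
  then show "s u w = 1 \<or> s u w = -1" "s v w = 1 \<or> s v w = -1"
    and "s w u = - s u w" "s w v = - s v w"
    using oriented_graph_adj_sign[OF oriented] oriented_graph_antisym[OF oriented] u_in v_in
    by blast+
qed

lemma arc_sign_product:
  assumes "w \<in> nbhd V s u"
  shows "s u w * s v w = 1 \<or> s u w * s v w = -1"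
  using arc_signs(1,2)[OF assms] by auto

lemma uniform_twins_iff:
  "uniform_twins V s u v \<longleftrightarrow> (\<forall>w\<in>nbhd V s u. s u w * s v w = 1)"
proof -
  have "(s u w = 1 \<and> s v w = 1) \<or> (s w u = 1 \<and> s w v = 1) \<longleftrightarrow> s u w * s v w = 1"
    if "w \<in> nbhd V s u" for w
    using arc_signs[OF that] by auto
  then show ?thesis
    using not_adj same_nbhd unfolding uniform_twins_def by blast
qed

lemma opposite_twins_iff:
  "opposite_twins V s u v \<longleftrightarrow> (\<forall>w\<in>nbhd V s u. s u w * s v w = -1)"
proof -
  have "(s u w = 1 \<and> s w v = 1) \<or> (s v w = 1 \<and> s w u = 1) \<longleftrightarrow> s u w * s v w = -1"
    if "w \<in> nbhd V s u" for w
    using arc_signs[OF that] by auto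
  then show ?thesis
    using not_adj same_nbhd unfolding opposite_twins_def by blast
qed

lemma arc_sign_product_const:
  assumes C4: "all_C4_even V s" and "u \<noteq> v"
    and w: "w \<in> nbhd V s u" and w': "w' \<in> nbhd V s u"
  shows "s u w * s v w = s u w' * s v w'"
proof (cases "w = w'")
  case False
  have adj: "adj s u w" "adj s v w" "adj s u w'" "adj s v w'" and in_V: "w \<in> V" "w' \<in> V"
    using w w' unfolding common_nbhd_iff by blast+
  then have "distinct [u, w, v, w']"
    using False \<open>u \<noteq> v\<close> oriented_graph_not_adj_self[OF oriented] u_in v_in by auto
  moreover have "adj s w v" "adj s w' u"
    using adj(2,3) arc_signs(4)[OF w] arc_signs(3)[OF w'] unfolding adj_def by simp_all
  ultimately have "s u w * s w v * s v w' * s w' u > 0"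
    using all_C4_evenD[OF C4 u_in in_V(1) v_in in_V(2)] adj by blast
  then have "(s u w * s v w) * (s u w' * s v w') > 0"
    by (simp add: arc_signs(4)[OF w] arc_signs(3)[OF w'] mult_ac)
  then show ?thesis
    using arc_sign_product[OF w] arc_sign_product[OF w'] by auto
qed simp

theorem uniform_or_opposite_twins:
  assumes "all_C4_even V s" "u \<noteq> v"
  shows "uniform_twins V s u v \<or> opposite_twins V s u v"
proof (cases "nbhd V s u = {}")
  case False
  then obtain w0 where w0: "w0 \<in> nbhd V s u" by blast
  have const: "\<forall>w\<in>nbhd V s u. s u w * s v w = s u w0 * s v w0"
    using arc_sign_product_const[OF assms _ w0] by blast
  from arc_sign_product[OF w0] show ?thesis
  proof
    assume "s u w0 * s v w0 = 1"
    then show ?thesis using const uniform_twins_iff by simp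
  next
    assume "s u w0 * s v w0 = -1"
    then show ?thesis using const opposite_twins_iff by simp
  qed
qed (simp add: uniform_twins_iff)

end

lemma complete_multipartite_adj_iff:
  assumes "complete_multipartite V s P" "p \<in> P" "z \<in> p" "x \<in> V"
  shows "adj s z x \<longleftrightarrow> x \<notin> p"
proof -
  have "partition_on V P" and adj_iff: "\<forall>x\<in>V. \<forall>y\<in>V. adj s x y \<longleftrightarrow> \<not> (\<exists>p\<in>P. x \<in> p \<and> y \<in> p)"
    using assms(1) unfolding complete_multipartite_def by blast+
  then have "z \<in> V" and unique: "\<And>q. q \<in> P \<Longrightarrow> z \<in> q \<Longrightarrow> q = p"
    using assms(2,3) unfolding partition_on_def disjoint_def by blast+
  show ?thesis
    using adj_iff \<open>z \<in> V\<close> assms(2-4) unique by blast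
qed

lemma complete_multipartite_nbhd:
  assumes "complete_multipartite V s P" "p \<in> P" "z \<in> p"
  shows "nbhd V s z = V - p"
  using complete_multipartite_adj_iff[OF assms] unfolding nbhd_def by blast

theorem lemma2p9:
  fixes V :: "'a set" and s :: "'a \<Rightarrow> 'a \<Rightarrow> int" and P :: "'a set set"
  assumes "oriented_graph V s"
    and "complete_multipartite V s P"
    and "all_C4_even V s"
    and "p \<in> P" and "u \<in> p" and "v \<in> p" and "u \<noteq> v"
  shows "uniform_twins V s u v \<or> opposite_twins V s u v"
proof -
  have "p \<subseteq> V"
    using assms(2,4) unfolding complete_multipartite_def partition_on_def by blast
  then have "u \<in> V" "v \<in> V"
    using assms(5,6) by blast+
  moreover have "\<not> adj s u v"
    using complete_multipartite_adj_iff[OF assms(2,4,5) \<open>v \<in> V\<close>] assms(6) by simp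
  moreover have "nbhd V s u = nbhd V s v"
    using complete_multipartite_nbhd[OF assms(2,4)] assms(5,6) by simp
  ultimately interpret false_twins V s u v
    using assms(1) by unfold_locales
  show ?thesis
    using uniform_or_opposite_twins assms(3,7) .
qed

end
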